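(* If $K_1$ and $K_2$ are long virtual knots obtained from one another by a finite sequence of extended Reidemeister moves and band-pass moves, then $$v_{2,1}(K_1)+v_{2,2}(K_1)\equiv v_{2,1}(K_2)+v_{2,2}(K_2)\pmod 2.$$
   Context: Long virtual knots are immersions $\mathbb{R}\to\mathbb{R}^2$ agreeing with the $x$-axis outside a compact set, with double points marked classical or virtual, oriented from $-\infty$ to $\infty$, considered up to the extended Reidemeister moves (classical Reidemeister moves and the detour move). A band-pass move is the local move in which, inside a disk, one band (a pair of parallel strands of opposite orientation) crosses another such band at four classical crossings with the first band passing entirely over the second, and this is replaced by the configuration where the first band passes entirely under the second (both orientation versions of this move are allowed). Gauss diagram $D_K$ of a long virtual knot: the real line with one arrow for each classical crossing joining its two preimages, pointing from the overcrossing preimage to the undercrossing preimage, labeled with the local writhe sign $\pm1$. The Goussarov–Polyak–Viro degree-two invariants $v_{2,1},v_{2,2}$ are defined as follows: for each unordered pair of arrows $\{a,b\}$ of $D_K$ whose four endpoints $p_1<p_2<p_3<p_4$ on $\mathbb{R}$ satisfy that $a$ joins $p_1,p_3$ and $b$ joins $p_2,p_4$, the pair contributes $\mathrm{sign}(a)\,\mathrm{sign}(b)$ to $v_{2,1}(K)$ if $a$ points $p_1\to p_3$ and $b$ points $p_4\to p_2$, and contributes $\mathrm{sign}(a)\,\mathrm{sign}(b)$ to $v_{2,2}(K)$ if $a$ points $p_3\to p_1$ and $b$ points $p_2\to p_4$; other pairs contribute nothing. (Only the sum $v_{2,1}+v_{2,2}$ enters the statement.) *)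

theory Defs
  imports Main "HOL-Library.Multiset"
begin

text \<open>Gauss diagrams of long virtual knots, encoded as the word of arrow endpoints
  read along the real line from -infinity to +infinity.  An endpoint records the
  arrow it belongs to, whether it is the tail (overcrossing preimage) or the head
  (undercrossing preimage), and the writhe sign of the arrow (True = +1).\<close>

datatype ep = Ep (aid: nat) (is_tail: bool) (pos: bool)

type_synonym gauss = "ep list"

definition sg :: "ep \<Rightarrow> int" where
  "sg e = (if pos e then 1 else -1)"

definition wf_gauss :: "gauss \<Rightarrow> bool" where
  "wf_gauss D \<longleftrightarrow> distinct D \<and>
     (\<forall>i t s. Ep i t s \<in> set D \<longrightarrow> Ep i (\<not> t) s \<in> set D \<and> Ep i t (\<not> s) \<notin> set D)"

definition v21 :: "gauss \<Rightarrow> int" where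
  "v21 D = (\<Sum>(i,j,k,l) \<in> {(i,j,k,l). i < j \<and> j < k \<and> k < l \<and> l < length D \<and>
       aid (D!i) = aid (D!k) \<and> aid (D!j) = aid (D!l) \<and>
       is_tail (D!i) \<and> is_tail (D!l)}. sg (D!i) * sg (D!j))"

definition v22 :: "gauss \<Rightarrow> int" where
  "v22 D = (\<Sum>(i,j,k,l) \<in> {(i,j,k,l). i < j \<and> j < k \<and> k < l \<and> l < length D \<and>
       aid (D!i) = aid (D!k) \<and> aid (D!j) = aid (D!l) \<and>
       is_tail (D!k) \<and> is_tail (D!j)}. sg (D!i) * sg (D!j))"

text \<open>Local moves: a diagram is cut into gaps and segments
  x0 s1 x1 s2 ... sn xn; the segments are replaced, the gaps kept.\<close>
fun interl :: "'a list list \<Rightarrow> 'a list list \<Rightarrow> 'a list" where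
  "interl (x # xs) (s # ss) = x @ s @ interl xs ss"
| "interl [x] [] = x"
| "interl _ _ = []"

definition local_repl :: "gauss \<Rightarrow> gauss \<Rightarrow> ep list list \<Rightarrow> ep list list \<Rightarrow> bool" where
  "local_repl D D' segs segs' \<longleftrightarrow> length segs' = length segs \<and>
     (\<exists>xs. length xs = Suc (length segs) \<and> D = interl xs segs \<and> D' = interl xs segs')"

definition R1 :: "gauss \<Rightarrow> gauss \<Rightarrow> bool" where
  "R1 D D' \<longleftrightarrow> (\<exists>i t s. local_repl D D' [[Ep i t s, Ep i (\<not> t) s]] [[]])"

text \<open>Reidemeister II: deleting two arrows of opposite signs with both tails
  adjacent and both heads adjacent (strands parallel or antiparallel).\<close>
definition R2 :: "gauss \<Rightarrow> gauss \<Rightarrow> bool" where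
  "R2 D D' \<longleftrightarrow> (\<exists>i j s ori segs. i \<noteq> j \<and>
     mset segs = {# [Ep i True s, Ep j True (\<not> s)],
                    (if ori then [Ep i False s, Ep j False (\<not> s)]
                            else [Ep j False (\<not> s), Ep i False s]) #} \<and>
     local_repl D D' segs [[], []])"

text \<open>Reidemeister III: three strands top T, middle M, bottom B, arrows
  a (T over M), b (T over B), c (M over B); each of the three segments
  has its two endpoints reversed.  The sign/order conditions are exactly
  those realized by three lines in the plane around a small triangle.
  xT: T meets M before B; xM: M meets T before B; xB: B meets T before M.\<close>
definition R3 :: "gauss \<Rightarrow> gauss \<Rightarrow> bool" where
  "R3 D D' \<longleftrightarrow> (\<exists>a b c sa sb sc xT xM xB segs. distinct [a, b, c] \<and>
     ((sa = sb) \<longleftrightarrow> (xM = xB)) \<and> ((sb = sc) \<longleftrightarrow> (xT = xM)) \<and>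
     mset segs = {# (if xT then [Ep a True sa, Ep b True sb] else [Ep b True sb, Ep a True sa]),
                    (if xM then [Ep a False sa, Ep c True sc] else [Ep c True sc, Ep a False sa]),
                    (if xB then [Ep b False sb, Ep c False sc] else [Ep c False sc, Ep b False sb]) #} \<and>
     local_repl D D' segs (map rev segs))"

definition relabel :: "gauss \<Rightarrow> gauss \<Rightarrow> bool" where
  "relabel D D' \<longleftrightarrow> (\<exists>f. inj f \<and> D' = map (\<lambda>e. Ep (f (aid e)) (is_tail e) (pos e)) D)"

text \<open>Crossing change at an arrow: reverse it and negate its sign.\<close>
definition flip_ep :: "ep \<Rightarrow> ep" where
  "flip_ep e = Ep (aid e) (\<not> is_tail e) (\<not> pos e)"

text \<open>Band-pass move: strands a1, a2 (band A, antiparallel) pass over strands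
  b1, b2 (band B, antiparallel) at four crossings; arrow p_kl joins a_k to b_l.
  a1 meets b1 then b2, a2 meets b2 then b1; b1 meets a1 then a2 (ori) or the
  reverse, b2 in the opposite order; signs of p11, p22 equal s, of p12, p21
  equal -s.  The move makes band A pass under band B: all four crossings are
  switched.\<close>
definition BP :: "gauss \<Rightarrow> gauss \<Rightarrow> bool" where
  "BP D D' \<longleftrightarrow> (\<exists>p11 p12 p21 p22 s ori segs. distinct [p11, p12, p21, p22] \<and>
     mset segs = {# [Ep p11 True s, Ep p12 True (\<not> s)],
                    [Ep p22 True s, Ep p21 True (\<not> s)],
                    (if ori then [Ep p11 False s, Ep p21 False (\<not> s)]
                            else [Ep p21 False (\<not> s), Ep p11 False s]),
                    (if ori then [Ep p22 False s, Ep p12 False (\<not> s)]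
                            else [Ep p12 False (\<not> s), Ep p22 False s]) #} \<and>
     local_repl D D' segs (map (map flip_ep) segs))"

definition ext_bp_step :: "gauss \<Rightarrow> gauss \<Rightarrow> bool" where
  "ext_bp_step D D' \<longleftrightarrow> wf_gauss D \<and> wf_gauss D' \<and>
     (R1 D D' \<or> R1 D' D \<or> R2 D D' \<or> R2 D' D \<or> R3 D D' \<or> R3 D' D \<or>
      relabel D D' \<or> relabel D' D \<or> BP D D' \<or> BP D' D)"

end

theory Submission
  imports Defs "HOL-Combinatorics.Transposition"
begin

text \<open>Modulo 2 the signs in \<open>v21\<close> and \<open>v22\<close> do not matter, so \<open>v21 + v22\<close> is congruent to the
  number of interleaved pairs of arrows pointing in opposite directions along the line. This number is
  invariant modulo 2 under all moves. Reidemeister I and II delete arrows whose endpoints are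
  adjacent to each other, or to those of a parallel arrow, so the deleted pairs contribute nothing or
  everything twice. Reidemeister III only transposes adjacent endpoints; such a transposition toggles
  exactly whether the two arrows involved interleave, which matters exactly when they point in opposite
  directions, and around the triangle this happens an even number of times. A band-pass move reverses
  four arrows; reversing a set of arrows toggles their pairs with interleaved arrows outside the set,
  and as the eight reversed endpoints come in four adjacent pairs, every other arrow interleaves an
  even number of the four.\<close>

section \<open>Positions of endpoints\<close>

definition arrows :: "gauss \<Rightarrow> nat set" where
  "arrows D = aid ` set D"

definition end_pos :: "gauss \<Rightarrow> nat \<Rightarrow> bool \<Rightarrow> nat" where
  "end_pos D a t = (THE i. i < length D \<and> aid (D!i) = a \<and> is_tail (D!i) = t)"

abbreviation tail_pos :: "gauss \<Rightarrow> nat \<Rightarrow> nat" where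
  "tail_pos D a \<equiv> end_pos D a True"

abbreviation head_pos :: "gauss \<Rightarrow> nat \<Rightarrow> nat" where
  "head_pos D a \<equiv> end_pos D a False"

lemma finite_arrows [simp]: "finite (arrows D)"
  unfolding arrows_def by simp

lemma nth_aid_in_arrows: "i < length D \<Longrightarrow> aid (D!i) \<in> arrows D"
  unfolding arrows_def by auto

lemma wf_gauss_nth_unique:
  assumes "wf_gauss D" "i < length D" "j < length D"
    and "aid (D!i) = aid (D!j)" "is_tail (D!i) = is_tail (D!j)"
  shows "i = j"
proof -
  obtain a t s s' where ij: "D!i = Ep a t s" "D!j = Ep a t s'"
    using assms(4,5) by (cases "D!i"; cases "D!j") auto
  moreover have "Ep a t s \<in> set D" "Ep a t s' \<in> set D"
    using assms(2,3) ij by (metis nth_mem)+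
  ultimately have "D!i = D!j"
    using assms(1) unfolding wf_gauss_def by (cases "s = s'") auto
  then show ?thesis using assms(1-3) unfolding wf_gauss_def by (simp add: nth_eq_iff_index_eq)
qed

lemma wf_gauss_other_end:
  assumes "wf_gauss D" "i < length D" "k < length D" "i \<noteq> k" "aid (D!i) = aid (D!k)"
  shows "is_tail (D!k) \<longleftrightarrow> \<not> is_tail (D!i)"
  using wf_gauss_nth_unique[OF assms(1-3,5)] assms(4) by (cases "is_tail (D!k)") auto

lemma wf_gauss_has_end:
  assumes "wf_gauss D" "a \<in> arrows D"
  shows "\<exists>i<length D. aid (D!i) = a \<and> is_tail (D!i) = t"
proof -
  obtain u s where "Ep a u s \<in> set D" using assms(2) unfolding arrows_def by (metis ep.collapse imageE)
  moreover from this have "Ep a (\<not> u) s \<in> set D" using assms(1) unfolding wf_gauss_def by blast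
  ultimately have "Ep a t s \<in> set D" by (cases "u = t") (auto simp: eq_commute[of t])
  then show ?thesis by (metis ep.sel(1,2) in_set_conv_nth)
qed

lemma end_pos_eqI:
  "wf_gauss D \<Longrightarrow> i < length D \<Longrightarrow> aid (D!i) = a \<Longrightarrow> is_tail (D!i) = t \<Longrightarrow> end_pos D a t = i"
  unfolding end_pos_def by (rule the_equality) (auto intro: wf_gauss_nth_unique)

lemma end_pos:
  assumes "wf_gauss D" "a \<in> arrows D"
  shows "end_pos D a t < length D" "aid (D ! end_pos D a t) = a" "is_tail (D ! end_pos D a t) = t"
  using wf_gauss_has_end[OF assms, of t] end_pos_eqI[OF assms(1)] by auto

lemma end_pos_eq_iff:
  assumes "wf_gauss D" "a \<in> arrows D" "b \<in> arrows D"
  shows "end_pos D a t = end_pos D b u \<longleftrightarrow> a = b \<and> t = u"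
proof
  assume "end_pos D a t = end_pos D b u"
  then show "a = b \<and> t = u" using end_pos[OF assms(1,2), of t] end_pos[OF assms(1,3), of u] by simp
qed simp

lemma end_pos_append:
  "wf_gauss D \<Longrightarrow> D = P @ e # S \<Longrightarrow> end_pos D (aid e) (is_tail e) = length P"
  by (rule end_pos_eqI) auto

section \<open>Interleaved pairs of opposite direction\<close>

text \<open>With \<open>(ta, ha)\<close> and \<open>(tb, hb)\<close> the tail and head positions of arrows \<open>a\<close> and \<open>b\<close>, the value is 1
  iff the two chords interleave, \<open>a\<close> starts first, and exactly one of them points forward; so
  \<open>link_count\<close> counts each such unordered pair once.\<close>
definition opp_link :: "nat \<Rightarrow> nat \<Rightarrow> nat \<Rightarrow> nat \<Rightarrow> nat" where
  "opp_link ta ha tb hb =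
     (if ta < hb \<and> hb < ha \<and> ha < tb then 1 else 0) + (if ha < tb \<and> tb < ta \<and> ta < hb then 1 else 0)"

definition link_count :: "nat set \<Rightarrow> (nat \<Rightarrow> nat) \<Rightarrow> (nat \<Rightarrow> nat) \<Rightarrow> nat" where
  "link_count A t h = (\<Sum>a\<in>A. \<Sum>b\<in>A. opp_link (t a) (h a) (t b) (h b))"

definition opp_crossings :: "gauss \<Rightarrow> nat" where
  "opp_crossings D = link_count (arrows D) (tail_pos D) (head_pos D)"

lemma sum_sum_indicator_eq_card:
  "finite A \<Longrightarrow> (\<Sum>a\<in>A. \<Sum>b\<in>A. if P a b then 1 else 0 :: nat) = card {(a,b) \<in> A \<times> A. P a b}"
proof -
  assume "finite A"
  have "(\<Sum>a\<in>A. \<Sum>b\<in>A. if P a b then 1 else 0 :: nat) = (\<Sum>p\<in>A \<times> A. if case_prod P p then 1 else 0)"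
    by (simp add: sum.cartesian_product case_prod_unfold)
  also have "\<dots> = card {p \<in> A \<times> A. case_prod P p}"
    using \<open>finite A\<close> by (simp add: sum.If_cases Int_def)
  also have "{p \<in> A \<times> A. case_prod P p} = {(a,b) \<in> A \<times> A. P a b}" by auto
  finally show ?thesis .
qed

lemma link_count_eq_card:
  assumes "finite A"
  shows "link_count A t h = card {(a,b) \<in> A \<times> A. t a < h b \<and> h b < h a \<and> h a < t b}
                          + card {(a,b) \<in> A \<times> A. h a < t b \<and> t b < t a \<and> t a < h b}"
  unfolding link_count_def opp_link_def sum.distrib by (simp only: sum_sum_indicator_eq_card[OF assms])

lemma sum_plus_minus_one_mod_2:
  assumes "finite S" "\<forall>x\<in>S. f x = 1 \<or> f x = -1"
  shows "(\<Sum>x\<in>S. f x) mod 2 = int (card S) mod 2"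
proof -
  have "(\<Sum>x\<in>S. f x) mod 2 = (\<Sum>x\<in>S. f x mod 2) mod 2" by (rule mod_sum_eq[symmetric])
  also have "(\<Sum>x\<in>S. f x mod 2) = (\<Sum>x\<in>S. 1)" using assms(2) by (intro sum.cong) auto
  finally show ?thesis by simp
qed

lemma card_interleaved_quadruples:
  assumes wf: "wf_gauss D"
  shows "card {(i,j,k,l). i < j \<and> j < k \<and> k < l \<and> l < length D \<and>
              aid (D!i) = aid (D!k) \<and> aid (D!j) = aid (D!l) \<and>
              is_tail (D!i) = t \<and> is_tail (D!j) = (\<not> t)}
       = card {(a,b) \<in> arrows D \<times> arrows D. end_pos D a t < end_pos D b (\<not> t) \<and>
              end_pos D b (\<not> t) < end_pos D a (\<not> t) \<and> end_pos D a (\<not> t) < end_pos D b t}"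
    (is "card ?Q = card ?P")
proof -
  let ?e = "end_pos D"
  let ?g = "\<lambda>(a,b). (?e a t, ?e b (\<not> t), ?e a (\<not> t), ?e b t)"
  have "inj_on ?g ?P"
    by (rule inj_onI) (auto simp: end_pos_eq_iff[OF wf])
  moreover have "?Q = ?g ` ?P"
  proof
    show "?Q \<subseteq> ?g ` ?P"
    proof
      fix q assume "q \<in> ?Q"
      then obtain i j k l where q: "q = (i,j,k,l)" and c: "i < j" "j < k" "k < l" "l < length D"
        "aid (D!i) = aid (D!k)" "aid (D!j) = aid (D!l)" "is_tail (D!i) = t" "is_tail (D!j) = (\<not> t)"
        by blast
      have tk: "is_tail (D!k) = (\<not> t)" and tl: "is_tail (D!l) = t"
        using wf_gauss_other_end[OF wf, of i k] wf_gauss_other_end[OF wf, of j l] c by auto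
      let ?a = "aid (D!i)" and ?b = "aid (D!j)"
      have "?e ?a t = i" "?e ?a (\<not> t) = k" "?e ?b (\<not> t) = j" "?e ?b t = l"
        using c tk tl by (auto intro!: end_pos_eqI[OF wf])
      moreover have "?a \<in> arrows D" "?b \<in> arrows D" using c by (auto intro: nth_aid_in_arrows)
      ultimately show "q \<in> ?g ` ?P" using q c by (auto intro!: image_eqI[of _ _ "(?a, ?b)"])
    qed
    show "?g ` ?P \<subseteq> ?Q"
      using end_pos[OF wf] by auto
  qed
  ultimately show ?thesis by (simp add: card_image)
qed

lemma v21_v22_mod_2:
  assumes wf: "wf_gauss D"
  shows "(v21 D + v22 D) mod 2 = int (opp_crossings D) mod 2"
proof -
  let ?Q = "\<lambda>t. {(i,j,k,l). i < j \<and> j < k \<and> k < l \<and> l < length D \<and>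
              aid (D!i) = aid (D!k) \<and> aid (D!j) = aid (D!l) \<and>
              is_tail (D!i) = t \<and> is_tail (D!j) = (\<not> t)}"
  have other_end: "is_tail (D!k) \<longleftrightarrow> \<not> is_tail (D!i)"
    if "i < k" "k < length D" "aid (D!i) = aid (D!k)" for i k
    using wf_gauss_other_end[OF wf, of i k] that by simp
  have v21: "v21 D = (\<Sum>(i,j,k,l)\<in>?Q True. sg (D!i) * sg (D!j))"
    unfolding v21_def by (intro sum.cong refl) (auto, (metis other_end less_trans)+)
  have v22: "v22 D = (\<Sum>(i,j,k,l)\<in>?Q False. sg (D!i) * sg (D!j))"
    unfolding v22_def by (intro sum.cong refl) (auto, (metis other_end less_trans)+)
  have mod2: "(\<Sum>(i,j,k,l)\<in>?Q t. sg (D!i) * sg (D!j)) mod 2 = int (card (?Q t)) mod 2" for t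
  proof (rule sum_plus_minus_one_mod_2)
    show "finite (?Q t)"
      by (rule finite_subset[of _ "{..<length D} \<times> {..<length D} \<times> {..<length D} \<times> {..<length D}"]) auto
  qed (auto simp: sg_def)
  have "int (opp_crossings D) = int (card (?Q True)) + int (card (?Q False))"
    unfolding opp_crossings_def link_count_eq_card[OF finite_arrows] card_interleaved_quadruples[OF wf]
    by (simp only: of_nat_add not_True_eq_False not_False_eq_True)
  moreover have "(v21 D + v22 D) mod 2 = (v21 D mod 2 + v22 D mod 2) mod 2"
    by (simp add: mod_add_eq)
  ultimately show ?thesis unfolding v21 v22 mod2 by (simp add: mod_add_eq)
qed

section \<open>Chords on a line\<close>

definition between :: "nat \<Rightarrow> nat \<Rightarrow> nat \<Rightarrow> bool" where
  "between x y z \<longleftrightarrow> x < z \<and> z < y \<or> y < z \<and> z < x"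

definition interleaved :: "nat \<Rightarrow> nat \<Rightarrow> nat \<Rightarrow> nat \<Rightarrow> bool" where
  "interleaved ta ha tb hb \<longleftrightarrow> between ta ha tb \<noteq> between ta ha hb"

definition adjacent :: "nat \<Rightarrow> nat \<Rightarrow> bool" where
  "adjacent m n \<longleftrightarrow> n = Suc m \<or> m = Suc n"

lemma between_commute: "between y x z = between x y z"
  unfolding between_def by auto

lemma interleaved_commute:
  "distinct [ta, ha, tb, hb] \<Longrightarrow> interleaved tb hb ta ha = interleaved ta ha tb hb"
  unfolding interleaved_def between_def
  by (cases "ta < ha"; cases "ta < tb"; cases "ta < hb"; cases "ha < tb"; cases "ha < hb"; cases "tb < hb")
    auto

lemma opp_link_pair:
  assumes "distinct [ta, ha, tb, hb]"
  shows "opp_link ta ha tb hb + opp_link tb hb ta ha =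
           (if interleaved ta ha tb hb \<and> (ta < ha) \<noteq> (tb < hb) then 1 else 0)"
  using assms unfolding opp_link_def interleaved_def between_def
  by (cases "ta < ha"; cases "ta < tb"; cases "ta < hb"; cases "ha < tb"; cases "ha < hb"; cases "tb < hb")
    auto

lemma interleaved_flip_left: "interleaved ha ta tb hb = interleaved ta ha tb hb"
  unfolding interleaved_def by (simp add: between_commute)

lemma interleaved_flip_right: "interleaved ta ha hb tb = interleaved ta ha tb hb"
  unfolding interleaved_def by auto

lemma adjacent_commute: "adjacent m n = adjacent n m"
  unfolding adjacent_def by auto

lemma adjacent_less_iff:
  "adjacent m n \<Longrightarrow> z \<noteq> m \<Longrightarrow> z \<noteq> n \<Longrightarrow> (m < z \<longleftrightarrow> n < z) \<and> (z < m \<longleftrightarrow> z < n)"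
  unfolding adjacent_def by auto

lemma opp_link_adjacent:
  "adjacent ta ha \<Longrightarrow> tx \<notin> {ta, ha} \<Longrightarrow> hx \<notin> {ta, ha} \<Longrightarrow>
     opp_link ta ha tx hx = 0 \<and> opp_link tx hx ta ha = 0"
  unfolding opp_link_def adjacent_def by (elim disjE) auto

lemma opp_link_adjacent_cong:
  assumes "adjacent ti tj" "adjacent hi hj" "tx \<notin> {ti, tj, hi, hj}" "hx \<notin> {ti, tj, hi, hj}"
  shows "opp_link ti hi tx hx = opp_link tj hj tx hx \<and> opp_link tx hx ti hi = opp_link tx hx tj hj"
proof -
  have "(ti < z \<longleftrightarrow> tj < z) \<and> (z < ti \<longleftrightarrow> z < tj) \<and> (hi < z \<longleftrightarrow> hj < z) \<and> (z < hi \<longleftrightarrow> z < hj)"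
    if "z \<in> {tx, hx}" for z
    using that assms adjacent_less_iff[OF assms(1)] adjacent_less_iff[OF assms(2)] by auto
  then show ?thesis unfolding opp_link_def by simp
qed

lemma opp_link_parallel:
  "adjacent ti tj \<Longrightarrow> adjacent hi hj \<Longrightarrow> distinct [ti, tj, hi, hj] \<Longrightarrow>
     opp_link ti hi tj hj = 0 \<and> opp_link tj hj ti hi = 0"
  unfolding opp_link_def adjacent_def by (elim disjE) auto

lemma between_adjacent:
  "adjacent m n \<Longrightarrow> x \<notin> {m, n} \<Longrightarrow> y \<notin> {m, n} \<Longrightarrow> between x y m = between x y n"
  unfolding adjacent_def between_def by (elim disjE) auto

definition pair_link :: "(nat \<Rightarrow> nat) \<Rightarrow> (nat \<Rightarrow> nat) \<Rightarrow> nat \<Rightarrow> nat \<Rightarrow> nat" where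
  "pair_link t h a b = opp_link (t a) (h a) (t b) (h b) + opp_link (t b) (h b) (t a) (h a)"

lemma opp_link_self [simp]: "opp_link ta ha ta ha = 0"
  unfolding opp_link_def by auto

lemma sum_square_split:
  fixes f :: "'a \<Rightarrow> 'a \<Rightarrow> 'b::comm_monoid_add"
  assumes "finite A" "B \<subseteq> A"
  shows "(\<Sum>a\<in>A. \<Sum>b\<in>A. f a b) = (\<Sum>a\<in>A-B. \<Sum>b\<in>A-B. f a b)
           + (\<Sum>x\<in>A-B. \<Sum>p\<in>B. f p x + f x p) + (\<Sum>p\<in>B. \<Sum>q\<in>B. f p q)"
proof -
  have split: "(\<Sum>a\<in>A. g a) = (\<Sum>a\<in>A-B. g a) + (\<Sum>a\<in>B. g a)" for g :: "'a \<Rightarrow> 'b"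
    using assms by (metis sum.subset_diff)
  have "(\<Sum>a\<in>A. \<Sum>b\<in>A. f a b) = (\<Sum>a\<in>A. (\<Sum>b\<in>A-B. f a b) + (\<Sum>b\<in>B. f a b))"
    by (rule sum.cong[OF refl], rule split)
  also have "\<dots> = (\<Sum>a\<in>A-B. (\<Sum>b\<in>A-B. f a b) + (\<Sum>b\<in>B. f a b))
                  + (\<Sum>a\<in>B. (\<Sum>b\<in>A-B. f a b) + (\<Sum>b\<in>B. f a b))"
    by (rule split)
  also have "\<dots> = (\<Sum>a\<in>A-B. \<Sum>b\<in>A-B. f a b) + ((\<Sum>a\<in>A-B. \<Sum>b\<in>B. f a b) + (\<Sum>a\<in>B. \<Sum>b\<in>A-B. f a b))
                  + (\<Sum>a\<in>B. \<Sum>b\<in>B. f a b)"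
    by (simp add: sum.distrib ac_simps)
  also have "(\<Sum>a\<in>A-B. \<Sum>b\<in>B. f a b) + (\<Sum>a\<in>B. \<Sum>b\<in>A-B. f a b) = (\<Sum>x\<in>A-B. \<Sum>p\<in>B. f p x + f x p)"
    by (simp add: sum.distrib sum.swap[of _ B] add.commute)
  finally show ?thesis .
qed

lemma link_count_split:
  assumes "finite A" "B \<subseteq> A"
  shows "link_count A t h = link_count (A - B) t h + (\<Sum>x\<in>A - B. \<Sum>p\<in>B. pair_link t h p x) + link_count B t h"
  unfolding link_count_def pair_link_def using sum_square_split[OF assms] .

lemma link_count_cong:
  "(\<And>a. a \<in> A \<Longrightarrow> t a = t' a \<and> h a = h' a) \<Longrightarrow> link_count A t h = link_count A t' h'"
  unfolding link_count_def by (intro sum.cong refl) auto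

lemma link_count_strict_mono:
  "strict_mono g \<Longrightarrow> link_count A (g \<circ> t) (g \<circ> h) = link_count A t h"
  unfolding link_count_def opp_link_def by (simp add: strict_mono_less)

lemma link_count_singleton [simp]: "link_count {a} t h = 0"
  unfolding link_count_def by simp

lemma link_count_doubleton: "a \<noteq> b \<Longrightarrow> link_count {a, b} t h = pair_link t h a b"
  unfolding link_count_def pair_link_def by simp

lemma link_count_local_change:
  assumes "finite A" "B \<subseteq> A"
    and "\<And>x. x \<in> A - B \<Longrightarrow> t' x = t x \<and> h' x = h x"
    and "\<And>x p. x \<in> A - B \<Longrightarrow> p \<in> B \<Longrightarrow> pair_link t' h' p x = pair_link t h p x"
  shows "link_count A t' h' + link_count B t h = link_count A t h + link_count B t' h'"
proof -
  have "link_count (A - B) t' h' = link_count (A - B) t h" using assms(3) by (rule link_count_cong)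
  moreover have "(\<Sum>x\<in>A - B. \<Sum>p\<in>B. pair_link t' h' p x) = (\<Sum>x\<in>A - B. \<Sum>p\<in>B. pair_link t h p x)"
    using assms(4) by simp
  ultimately show ?thesis
    using link_count_split[OF assms(1,2), of t h] link_count_split[OF assms(1,2), of t' h'] by simp
qed

section \<open>Deleting arrows, local moves, Reidemeister I and II\<close>

lemma filter_eq_nth_strict_mono:
  "\<exists>g. strict_mono g \<and> (\<forall>k < length (filter P xs). g k < length xs \<and> filter P xs ! k = xs ! g k)"
proof (induction xs)
  case Nil
  show ?case by (rule exI[of _ id]) (simp add: strict_mono_def)
next
  case (Cons x xs)
  then obtain g where g: "strict_mono g" "\<forall>k < length (filter P xs). g k < length xs \<and> filter P xs ! k = xs ! g k"
    by blast
  show ?case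
  proof (cases "P x")
    case True
    let ?g = "\<lambda>k. if k = 0 then 0 else Suc (g (k - 1))"
    have "strict_mono ?g" using g(1) by (simp add: strict_mono_def)
    moreover have "?g k < length (x # xs) \<and> filter P (x # xs) ! k = (x # xs) ! ?g k"
      if "k < length (filter P (x # xs))" for k
      using that True g(2) by (cases k) auto
    ultimately show ?thesis by blast
  next
    case False
    have "strict_mono (\<lambda>k. Suc (g k))" using g(1) by (simp add: strict_mono_def)
    then show ?thesis using False g(2) by (intro exI[of _ "\<lambda>k. Suc (g k)"]) auto
  qed
qed

lemma wf_gauss_filter_aid: "wf_gauss D \<Longrightarrow> wf_gauss (filter (\<lambda>e. aid e \<notin> M) D)"
  unfolding wf_gauss_def by auto

lemma arrows_filter_aid: "arrows (filter (\<lambda>e. aid e \<notin> M) D) = arrows D - M"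
  unfolding arrows_def by auto

lemma opp_crossings_filter_aid:
  assumes wf: "wf_gauss D"
  defines "t \<equiv> tail_pos D" and "h \<equiv> head_pos D"
  shows "opp_crossings D = opp_crossings (filter (\<lambda>e. aid e \<notin> M) D)
           + (\<Sum>x\<in>arrows D - M. \<Sum>p\<in>arrows D \<inter> M. pair_link t h p x) + link_count (arrows D \<inter> M) t h"
proof -
  define D' where "D' = filter (\<lambda>e. aid e \<notin> M) D"
  have wf': "wf_gauss D'" and A': "arrows D' = arrows D - M"
    unfolding D'_def using wf_gauss_filter_aid[OF wf] arrows_filter_aid by auto
  obtain g where g: "strict_mono g" "\<forall>k < length D'. g k < length D \<and> D' ! k = D ! g k"
    using filter_eq_nth_strict_mono unfolding D'_def by blast
  have "end_pos D a u = g (end_pos D' a u)" if "a \<in> arrows D'" for a u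
    using end_pos[OF wf' that, of u] g(2) by (intro end_pos_eqI[OF wf]) auto
  then have "link_count (arrows D - M) t h = opp_crossings D'"
    unfolding opp_crossings_def A'[symmetric] t_def h_def
    by (subst link_count_strict_mono[OF g(1), symmetric]) (auto intro: link_count_cong)
  moreover have "arrows D - (arrows D \<inter> M) = arrows D - M" by auto
  ultimately show ?thesis
    unfolding opp_crossings_def t_def h_def D'_def
    using link_count_split[OF finite_arrows, of "arrows D \<inter> M" D] by simp
qed

lemma interl_set:
  "length xs = Suc (length segs) \<Longrightarrow> set (interl xs segs) = (\<Union>x\<in>set xs. set x) \<union> (\<Union>s\<in>set segs. set s)"
proof (induction segs arbitrary: xs)
  case Nil then show ?case by (cases xs) auto
next
  case (Cons s ss) then show ?case by (cases xs) auto
qed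

lemma interl_map:
  "length xs = Suc (length segs) \<Longrightarrow> map f (interl xs segs) = interl (map (map f) xs) (map (map f) segs)"
proof (induction segs arbitrary: xs)
  case Nil then show ?case by (cases xs) auto
next
  case (Cons s ss) then show ?case by (cases xs) auto
qed

lemma interl_filter:
  "length xs = Suc (length segs) \<Longrightarrow> filter P (interl xs segs) = interl (map (filter P) xs) (map (filter P) segs)"
proof (induction segs arbitrary: xs)
  case Nil then show ?case by (cases xs) auto
next
  case (Cons s ss) then show ?case by (cases xs) auto
qed

lemma interl_split:
  "length xs = Suc (length segs) \<Longrightarrow> s \<in> set segs \<Longrightarrow> \<exists>P S. interl xs segs = P @ s @ S"
proof (induction segs arbitrary: xs)
  case Nil then show ?case by simp
next
  case (Cons s' ss)
  then obtain x xs' where xs: "xs = x # xs'" and l: "length xs' = Suc (length ss)" by (cases xs) auto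
  show ?case
  proof (cases "s = s'")
    case True then show ?thesis using xs by auto
  next
    case False
    then have "s \<in> set ss" using Cons.prems(2) by simp
    then obtain P S where "interl xs' ss = P @ s @ S" using Cons.IH[OF l] by blast
    then have "interl xs (s' # ss) = (x @ s' @ P) @ s @ S" using xs by simp
    then show ?thesis by blast
  qed
qed

lemma interl_distinct_disjoint:
  "length xs = Suc (length segs) \<Longrightarrow> distinct (interl xs segs) \<Longrightarrow>
     x \<in> set xs \<Longrightarrow> s \<in> set segs \<Longrightarrow> set x \<inter> set s = {}"
proof (induction segs arbitrary: xs)
  case Nil then show ?case by simp
next
  case (Cons s' ss)
  then obtain x0 xs' where xs: "xs = x0 # xs'" and l: "length xs' = Suc (length ss)" by (cases xs) auto
  have d: "distinct (x0 @ s' @ interl xs' ss)" using Cons.prems(2) xs by simp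
  then have "x \<in> set xs' \<Longrightarrow> s \<in> set ss \<Longrightarrow> set x \<inter> set s = {}" using Cons.IH[OF l] by simp
  then show ?case using Cons.prems(3,4) xs d interl_set[OF l] by fastforce
qed

lemma aid_notin_gap:
  assumes wf: "wf_gauss D" and D: "D = interl xs segs" and l: "length xs = Suc (length segs)"
    and x: "x \<in> set xs" "e \<in> set x"
    and in_segs: "\<And>t. \<exists>s\<in>set segs. Ep p t sp \<in> set s"
  shows "aid e \<noteq> p"
proof
  assume "aid e = p"
  then obtain t s' where e: "e = Ep p t s'" by (cases e) auto
  obtain s where s: "s \<in> set segs" "Ep p t sp \<in> set s" using in_segs by blast
  have "e \<in> set D" "Ep p t sp \<in> set D" using interl_set[OF l] D x s by auto
  then have "s' = sp" using wf e unfolding wf_gauss_def by (cases "s' = sp") auto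
  then show False
    using interl_distinct_disjoint[OF l _ x(1) s(1)] wf D x s e unfolding wf_gauss_def by auto
qed

lemma adjacent_in_segment:
  assumes wf: "wf_gauss D" and D: "D = interl xs segs" and l: "length xs = Suc (length segs)"
    and uv: "[u, v] \<in> set segs \<or> [v, u] \<in> set segs"
  shows "adjacent (end_pos D (aid u) (is_tail u)) (end_pos D (aid v) (is_tail v))"
proof -
  have "end_pos D (aid b) (is_tail b) = Suc (end_pos D (aid a) (is_tail a))" if ab: "[a, b] \<in> set segs" for a b
  proof -
    obtain P S where "D = P @ [a, b] @ S" using interl_split[OF l ab] D by blast
    then show ?thesis using end_pos_append[OF wf, of P a] end_pos_append[OF wf, of "P @ [a]" b] by simp
  qed
  then show ?thesis using uv unfolding adjacent_def by auto
qed

lemma interl_filter_segments: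
  assumes "length xs = Suc (length segs)"
    and "\<forall>x\<in>set xs. \<forall>e\<in>set x. aid e \<notin> M" and "\<forall>s\<in>set segs. \<forall>e\<in>set s. aid e \<in> M"
  shows "filter (\<lambda>e. aid e \<notin> M) (interl xs segs) = interl xs (map (\<lambda>_. []) segs)"
proof -
  let ?Q = "\<lambda>e. aid e \<notin> M"
  have "filter ?Q (interl xs segs) = interl (map (filter ?Q) xs) (map (filter ?Q) segs)"
    by (rule interl_filter[OF assms(1)])
  also have "map (filter ?Q) xs = xs"
    using assms(2) by (intro map_idI) (simp add: filter_id_conv)
  also have "map (filter ?Q) segs = map (\<lambda>_. []) segs"
    using assms(3) by (intro map_cong refl) (simp add: filter_empty_conv)
  finally show ?thesis .
qed

lemma opp_crossings_R1:
  assumes wf: "wf_gauss D" and "R1 D D'"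
  shows "opp_crossings D' = opp_crossings D"
proof -
  obtain i t s xs where l: "length xs = Suc (length [[Ep i t s, Ep i (\<not> t) s]])"
    and D: "D = interl xs [[Ep i t s, Ep i (\<not> t) s]]" and D': "D' = interl xs [[]]"
    using assms(2) unfolding R1_def local_repl_def by auto
  have "aid e \<noteq> i" if "x \<in> set xs" "e \<in> set x" for x e
    by (rule aid_notin_gap[OF wf D l that, where sp = s]) auto
  then have D'_filter: "D' = filter (\<lambda>e. aid e \<notin> {i}) D"
    using interl_filter_segments[OF l, of "{i}"] D D' by auto
  have i: "i \<in> arrows D" using interl_set[OF l] D unfolding arrows_def by force
  have "adjacent (end_pos D i t) (end_pos D i (\<not> t))"
    using adjacent_in_segment[OF wf D l, of "Ep i t s" "Ep i (\<not> t) s"] by simp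
  then have adj: "adjacent (tail_pos D i) (head_pos D i)" by (cases t) (simp_all add: adjacent_commute)
  have "pair_link (tail_pos D) (head_pos D) i x = 0" if "x \<in> arrows D - {i}" for x
    using that opp_link_adjacent[OF adj] end_pos_eq_iff[OF wf] i unfolding pair_link_def by auto
  moreover have "arrows D \<inter> {i} = {i}" using i by auto
  ultimately show ?thesis using opp_crossings_filter_aid[OF wf, of "{i}"] D'_filter by simp
qed

lemma opp_crossings_R2:
  assumes wf: "wf_gauss D" and "R2 D D'"
  shows "opp_crossings D' mod 2 = opp_crossings D mod 2"
proof -
  obtain i j s ori segs xs where ij: "i \<noteq> j"
    and ms: "mset segs = {# [Ep i True s, Ep j True (\<not> s)],
                    (if ori then [Ep i False s, Ep j False (\<not> s)]
                            else [Ep j False (\<not> s), Ep i False s]) #}"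
    and l: "length xs = Suc (length segs)" and D: "D = interl xs segs"
    and D': "D' = interl xs [[], []]"
    using assms(2) unfolding R2_def local_repl_def by auto
  have segs: "set segs = {[Ep i True s, Ep j True (\<not> s)],
      (if ori then [Ep i False s, Ep j False (\<not> s)] else [Ep j False (\<not> s), Ep i False s])}"
    using arg_cong[OF ms, of set_mset] by simp
  have "length segs = 2" using arg_cong[OF ms, of size] by simp
  then have "map (\<lambda>_. []) segs = [[], []]" by (simp add: map_replicate_const numeral_2_eq_2)
  moreover have "aid e \<notin> {i, j}" if "x \<in> set xs" "e \<in> set x" for x e
    using aid_notin_gap[OF wf D l that, of i s] aid_notin_gap[OF wf D l that, of j "\<not> s"]
    by (cases ori) (auto simp: segs)
  ultimately have D'_filter: "D' = filter (\<lambda>e. aid e \<notin> {i, j}) D"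
    using interl_filter_segments[OF l, of "{i, j}"] D D' segs by auto
  have i: "i \<in> arrows D" and j: "j \<in> arrows D"
    using interl_set[OF l] D segs unfolding arrows_def by force+
  let ?t = "tail_pos D" and ?h = "head_pos D"
  have tails: "adjacent (?t i) (?t j)"
    using adjacent_in_segment[OF wf D l, of "Ep i True s" "Ep j True (\<not> s)"] segs by simp
  have heads: "adjacent (?h i) (?h j)"
    using adjacent_in_segment[OF wf D l, of "Ep i False s" "Ep j False (\<not> s)"] segs by (cases ori) auto
  have "pair_link ?t ?h i x = pair_link ?t ?h j x" if x: "x \<in> arrows D - {i, j}" for x
    using opp_link_adjacent_cong[OF tails heads, of "?t x" "?h x"] x i j
    unfolding pair_link_def by (auto simp: end_pos_eq_iff[OF wf])
  then have "(\<Sum>x\<in>arrows D - {i, j}. \<Sum>p\<in>{i, j}. pair_link ?t ?h p x)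
           = 2 * (\<Sum>x\<in>arrows D - {i, j}. pair_link ?t ?h i x)"
    using ij by (simp add: sum_distrib_left mult_2)
  moreover have "link_count {i, j} ?t ?h = 0"
    using opp_link_parallel[OF tails heads] ij i j
    unfolding link_count_doubleton[OF ij] pair_link_def by (auto simp: end_pos_eq_iff[OF wf])
  moreover have "arrows D \<inter> {i, j} = {i, j}" using i j by auto
  ultimately show ?thesis using opp_crossings_filter_aid[OF wf, of "{i, j}"] D'_filter by simp
qed

section \<open>Adjacent transpositions and Reidemeister III\<close>

definition forward :: "gauss \<Rightarrow> nat \<Rightarrow> bool" where
  "forward D a \<longleftrightarrow> tail_pos D a < head_pos D a"

lemma interleaved_swap_adjacent:
  "u \<notin> {q, Suc q} \<Longrightarrow> v \<notin> {q, Suc q} \<Longrightarrow> interleaved (Suc q) u q v \<longleftrightarrow> \<not> interleaved q u (Suc q) v"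
  unfolding interleaved_def between_def by auto

lemma interleaved_transpose:
  assumes "tU = q \<or> hU = q" "tV = Suc q \<or> hV = Suc q" "distinct [tU, hU, tV, hV]"
  defines "\<tau> \<equiv> Transposition.transpose q (Suc q)"
  shows "interleaved (\<tau> tU) (\<tau> hU) (\<tau> tV) (\<tau> hV) \<longleftrightarrow> \<not> interleaved tU hU tV hV"
  using assms(1,2)
proof (elim disjE)
  assume "tU = q" "tV = Suc q"
  then show ?thesis using assms(3) interleaved_swap_adjacent[of hU q hV] by (simp add: \<tau>_def)
next
  assume "tU = q" "hV = Suc q"
  then show ?thesis using assms(3) interleaved_swap_adjacent[of hU q tV]
    by (simp add: \<tau>_def interleaved_flip_right[of _ _ tV])
next
  assume "hU = q" "tV = Suc q"
  then show ?thesis using assms(3) interleaved_swap_adjacent[of tU q hV]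
    by (simp add: \<tau>_def interleaved_flip_left[of tU])
next
  assume "hU = q" "hV = Suc q"
  then show ?thesis using assms(3) interleaved_swap_adjacent[of tU q tV]
    by (simp add: \<tau>_def interleaved_flip_left[of tU] interleaved_flip_right[of _ _ tV])
qed

lemma transpose_adjacent_less_iff:
  assumes "z \<notin> {q, Suc q}"
  shows "Transposition.transpose q (Suc q) y < z \<longleftrightarrow> y < z"
    and "z < Transposition.transpose q (Suc q) y \<longleftrightarrow> z < y"
  using assms unfolding Transposition.transpose_def by auto

lemma opp_link_transpose_fixed:
  assumes "tb \<notin> {q, Suc q}" "hb \<notin> {q, Suc q}"
  defines "\<tau> \<equiv> Transposition.transpose q (Suc q)"
  shows "opp_link (\<tau> ta) (\<tau> ha) tb hb = opp_link ta ha tb hb"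
    and "opp_link tb hb (\<tau> ta) (\<tau> ha) = opp_link tb hb ta ha"
  unfolding opp_link_def \<tau>_def
  by (simp_all add: transpose_adjacent_less_iff[OF assms(1)] transpose_adjacent_less_iff[OF assms(2)])

lemma wf_gauss_swap:
  assumes "wf_gauss (P @ u # v # S)"
  shows "wf_gauss (P @ v # u # S)"
proof -
  have "set (P @ v # u # S) = set (P @ u # v # S)" by auto
  moreover have "distinct (P @ v # u # S) = distinct (P @ u # v # S)"
    by (rule mset_eq_imp_distinct_iff) simp
  ultimately show ?thesis using assms unfolding wf_gauss_def by simp
qed

lemma arrows_swap: "arrows (P @ v # u # S) = arrows (P @ u # v # S)"
  unfolding arrows_def by auto

lemma nth_swap:
  "(P @ v # u # S) ! k = (P @ u # v # S) ! Transposition.transpose (length P) (Suc (length P)) k"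
proof -
  consider "k < length P" | "k = length P" | "k = Suc (length P)" | "Suc (length P) < k" by linarith
  then show ?thesis by cases (simp_all add: nth_append nth_Cons' Transposition.transpose_def)
qed

lemma end_pos_swap:
  assumes wf: "wf_gauss (P @ u # v # S)" and a: "a \<in> arrows (P @ u # v # S)"
  shows "end_pos (P @ v # u # S) a t
           = Transposition.transpose (length P) (Suc (length P)) (end_pos (P @ u # v # S) a t)"
proof -
  let ?D = "P @ u # v # S" and ?\<tau> = "Transposition.transpose (length P) (Suc (length P))"
  have "?\<tau> k < length ?D" if "k < length ?D" for k
    using that by (simp add: Transposition.transpose_def)
  then show ?thesis
    using end_pos[OF wf a, of t] by (intro end_pos_eqI[OF wf_gauss_swap[OF wf]]) (simp_all add: nth_swap[of P v u S])
qed

lemma swap_positions: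
  assumes wf: "wf_gauss (P @ u # v # S)"
  defines "D \<equiv> P @ u # v # S"
  shows "end_pos D (aid u) (is_tail u) = length P" and "end_pos D (aid v) (is_tail v) = Suc (length P)"
    and "\<And>a t. a \<in> arrows D \<Longrightarrow> a \<notin> {aid u, aid v} \<Longrightarrow> end_pos D a t \<notin> {length P, Suc (length P)}"
proof -
  show "end_pos D (aid u) (is_tail u) = length P" "end_pos D (aid v) (is_tail v) = Suc (length P)"
    using end_pos_append[OF wf, of P u] end_pos_append[OF wf, of "P @ [u]" v] unfolding D_def by simp_all
  fix a t assume "a \<in> arrows D" "a \<notin> {aid u, aid v}"
  then show "end_pos D a t \<notin> {length P, Suc (length P)}"
    using end_pos(2)[OF wf, of a t] unfolding D_def by (auto simp: nth_append)
qed

lemma swap_other_end_outside: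
  assumes wf: "wf_gauss (P @ u # v # S)" and uv: "aid u \<noteq> aid v" and a: "a \<in> arrows (P @ u # v # S)"
  shows "\<exists>t. end_pos (P @ u # v # S) a t \<notin> {length P, Suc (length P)}"
proof -
  let ?D = "P @ u # v # S"
  have uv_arrows: "aid u \<in> arrows ?D" "aid v \<in> arrows ?D" unfolding arrows_def by auto
  consider "a \<notin> {aid u, aid v}" | "a = aid u" | "a = aid v" by blast
  then show ?thesis
  proof cases
    case 1
    then show ?thesis using swap_positions(3)[OF wf a] by blast
  next
    case 2
    have "end_pos ?D (aid u) (\<not> is_tail u) \<noteq> end_pos ?D (aid u) (is_tail u)"
      "end_pos ?D (aid u) (\<not> is_tail u) \<noteq> end_pos ?D (aid v) (is_tail v)"
      using uv by (simp_all add: end_pos_eq_iff[OF wf] uv_arrows)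
    then show ?thesis using swap_positions(1,2)[OF wf] \<open>a = aid u\<close> by auto
  next
    case 3
    have "end_pos ?D (aid v) (\<not> is_tail v) \<noteq> end_pos ?D (aid v) (is_tail v)"
      "end_pos ?D (aid v) (\<not> is_tail v) \<noteq> end_pos ?D (aid u) (is_tail u)"
      using uv by (simp_all add: end_pos_eq_iff[OF wf] uv_arrows)
    then show ?thesis using swap_positions(1,2)[OF wf] \<open>a = aid v\<close> by auto
  qed
qed

lemma forward_swap:
  assumes wf: "wf_gauss (P @ u # v # S)" and uv: "aid u \<noteq> aid v" and a: "a \<in> arrows (P @ u # v # S)"
  shows "forward (P @ v # u # S) a = forward (P @ u # v # S) a"
proof -
  obtain t where out: "end_pos (P @ u # v # S) a t \<notin> {length P, Suc (length P)}"
    using swap_other_end_outside[OF wf uv a] by blast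
  show ?thesis
    using transpose_adjacent_less_iff[OF out] out
    unfolding forward_def end_pos_swap[OF wf a] by (cases t) simp_all
qed

lemma opp_link_pair_transpose:
  assumes at_U: "tU = q \<or> hU = q" and at_V: "tV = Suc q \<or> hV = Suc q" and dist: "distinct [tU, hU, tV, hV]"
  defines "\<tau> \<equiv> Transposition.transpose q (Suc q)"
  shows "(opp_link (\<tau> tU) (\<tau> hU) (\<tau> tV) (\<tau> hV) + opp_link (\<tau> tV) (\<tau> hV) (\<tau> tU) (\<tau> hU))
           + (opp_link tU hU tV hV + opp_link tV hV tU hU) = of_bool ((tU < hU) \<noteq> (tV < hV))"
proof -
  have "distinct (map \<tau> [tU, hU, tV, hV])"
    using dist unfolding \<tau>_def by (simp only: distinct_map inj_on_transpose simp_thms)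
  then have dist': "distinct [\<tau> tU, \<tau> hU, \<tau> tV, \<tau> hV]" by (simp only: list.map)
  have "(\<tau> tU < \<tau> hU) = (tU < hU)" "(\<tau> tV < \<tau> hV) = (tV < hV)"
    using at_U at_V dist unfolding \<tau>_def Transposition.transpose_def by auto
  then show ?thesis
    using interleaved_transpose[OF at_U at_V dist, folded \<tau>_def]
    unfolding opp_link_pair[OF dist] opp_link_pair[OF dist'] by simp
qed

lemma mod_2_eq_of_balanced_sums: "(n' :: nat) + a = n + b \<Longrightarrow> b + a = c \<Longrightarrow> n' mod 2 = (n + c) mod 2"
  by presburger

text \<open>The transposition toggles whether \<open>aid u\<close> and \<open>aid v\<close> interleave and changes no other order
  relation between endpoints of distinct arrows.\<close>
lemma opp_crossings_swap:
  assumes wf: "wf_gauss (P @ u # v # S)" and uv: "aid u \<noteq> aid v"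
  defines "D \<equiv> P @ u # v # S"
  shows "opp_crossings (P @ v # u # S) mod 2
           = (opp_crossings D + of_bool (forward D (aid u) \<noteq> forward D (aid v))) mod 2"
proof -
  let ?\<tau> = "Transposition.transpose (length P) (Suc (length P))"
  let ?t = "tail_pos D" and ?h = "head_pos D"
  let ?U = "aid u" and ?V = "aid v"
  have U: "?U \<in> arrows D" and V: "?V \<in> arrows D" unfolding D_def arrows_def by auto
  have outside: "end_pos D x t \<notin> {length P, Suc (length P)}" if "x \<in> arrows D - {?U, ?V}" for x t
    using swap_positions(3)[OF wf] that unfolding D_def by blast
  have swapped: "opp_crossings (P @ v # u # S) = link_count (arrows D) (?\<tau> \<circ> ?t) (?\<tau> \<circ> ?h)"
    unfolding opp_crossings_def arrows_swap D_def by (intro link_count_cong) (simp add: end_pos_swap[OF wf])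
  have "opp_crossings (P @ v # u # S) + pair_link ?t ?h ?U ?V
        = opp_crossings D + pair_link (?\<tau> \<circ> ?t) (?\<tau> \<circ> ?h) ?U ?V"
    unfolding swapped unfolding opp_crossings_def link_count_doubleton[OF uv, symmetric]
    using U V outside
    by (intro link_count_local_change) (auto simp: pair_link_def opp_link_transpose_fixed)
  moreover have "pair_link (?\<tau> \<circ> ?t) (?\<tau> \<circ> ?h) ?U ?V + pair_link ?t ?h ?U ?V
                   = of_bool (forward D ?U \<noteq> forward D ?V)"
  proof -
    have dist: "distinct [?t ?U, ?h ?U, ?t ?V, ?h ?V]"
      using uv by (simp add: end_pos_eq_iff[OF wf[folded D_def]] U V)
    have "?t ?U = length P \<or> ?h ?U = length P"
      using swap_positions(1)[OF wf] unfolding D_def by (cases "is_tail u") auto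
    moreover have "?t ?V = Suc (length P) \<or> ?h ?V = Suc (length P)"
      using swap_positions(2)[OF wf] unfolding D_def by (cases "is_tail v") auto
    ultimately show ?thesis
      using opp_link_pair_transpose[OF _ _ dist] unfolding pair_link_def forward_def by simp
  qed
  ultimately show ?thesis by (rule mod_2_eq_of_balanced_sums)
qed

definition discordant :: "gauss \<Rightarrow> ep list \<Rightarrow> nat" where
  "discordant D s = of_bool (forward D (aid (s!0)) \<noteq> forward D (aid (s!1)))"

lemma opp_crossings_reverse_segments:
  assumes "length xs = Suc (length segs)" and "\<forall>s\<in>set segs. length s = 2 \<and> aid (s!0) \<noteq> aid (s!1)"
    and "wf_gauss (P @ interl xs segs)"
  shows "opp_crossings (P @ interl xs (map rev segs)) mod 2
           = (opp_crossings (P @ interl xs segs) + (\<Sum>s\<leftarrow>segs. discordant (P @ interl xs segs) s)) mod 2"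
  using assms
proof (induction segs arbitrary: xs P)
  case Nil
  then show ?case by simp
next
  case (Cons s ss)
  obtain x0 xs' where xs: "xs = x0 # xs'" and l: "length xs' = Suc (length ss)"
    using Cons.prems(1) by (cases xs) auto
  obtain u v where s: "s = [u, v]" and uv: "aid u \<noteq> aid v"
    using Cons.prems(2) by (cases s; cases "tl s") (auto simp: numeral_2_eq_2)
  define D where "D = (P @ x0) @ u # v # interl xs' ss"
  define D1 where "D1 = (P @ x0) @ v # u # interl xs' ss"
  have D: "P @ interl xs (s # ss) = D" and D1: "D1 = (P @ x0 @ [v, u]) @ interl xs' ss"
    unfolding D_def D1_def xs s by simp_all
  have wf: "wf_gauss D" using Cons.prems(3) D by simp
  have wf1: "wf_gauss D1" unfolding D1_def using wf_gauss_swap wf unfolding D_def by blast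
  have "discordant D1 t = discordant D t" if "t \<in> set ss" for t
  proof -
    have "t!0 \<in> set t" "t!1 \<in> set t" using Cons.prems(2) that by simp_all
    then have "aid (t!0) \<in> arrows D" "aid (t!1) \<in> arrows D"
      using interl_set[OF l] that unfolding D_def arrows_def by fastforce+
    then show ?thesis
      unfolding discordant_def D1_def using forward_swap[OF wf[unfolded D_def] uv] D_def by simp
  qed
  then have disc: "(\<Sum>t\<leftarrow>ss. discordant D1 t) = (\<Sum>t\<leftarrow>ss. discordant D t)"
    by (metis map_cong)
  have "opp_crossings (P @ interl xs (map rev (s # ss))) mod 2
          = opp_crossings ((P @ x0 @ [v, u]) @ interl xs' (map rev ss)) mod 2"
    unfolding xs s by simp
  also have "\<dots> = (opp_crossings D1 + (\<Sum>t\<leftarrow>ss. discordant D1 t)) mod 2"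
    using Cons.IH[OF l _ wf1[unfolded D1]] Cons.prems(2) unfolding D1 by simp
  also have "\<dots> = (opp_crossings D1 mod 2 + (\<Sum>t\<leftarrow>ss. discordant D t)) mod 2"
    unfolding disc by (simp add: mod_add_left_eq)
  also have "opp_crossings D1 mod 2 = (opp_crossings D + discordant D s) mod 2"
    using opp_crossings_swap[OF wf[unfolded D_def] uv] unfolding D_def D1_def discordant_def s by simp
  finally show ?case unfolding D by (simp add: mod_add_left_eq add.assoc)
qed

lemma opp_crossings_R3:
  assumes wf: "wf_gauss D" and "R3 D D'"
  shows "opp_crossings D' mod 2 = opp_crossings D mod 2"
proof -
  obtain a b c sa sb sc xT xM xB segs xs where abc: "distinct [a, b, c]"
    and ms: "mset segs = {# (if xT then [Ep a True sa, Ep b True sb] else [Ep b True sb, Ep a True sa]),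
                    (if xM then [Ep a False sa, Ep c True sc] else [Ep c True sc, Ep a False sa]),
                    (if xB then [Ep b False sb, Ep c False sc] else [Ep c False sc, Ep b False sb]) #}"
    and l: "length xs = Suc (length segs)" and D: "D = interl xs segs" and D': "D' = interl xs (map rev segs)"
    using assms(2) unfolding R3_def local_repl_def by blast
  let ?d = "\<lambda>a b. of_bool (forward D a \<noteq> forward D b) :: nat"
  have segs: "set segs = {(if xT then [Ep a True sa, Ep b True sb] else [Ep b True sb, Ep a True sa]),
                    (if xM then [Ep a False sa, Ep c True sc] else [Ep c True sc, Ep a False sa]),
                    (if xB then [Ep b False sb, Ep c False sc] else [Ep c False sc, Ep b False sb])}"
    using arg_cong[OF ms, of set_mset] by simp
  have "\<forall>s\<in>set segs. length s = 2 \<and> aid (s!0) \<noteq> aid (s!1)"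
    using abc unfolding segs by (cases xT; cases xM; cases xB) simp_all
  then have "opp_crossings D' mod 2 = (opp_crossings D + (\<Sum>s\<leftarrow>segs. discordant D s)) mod 2"
    using opp_crossings_reverse_segments[OF l, of "[]"] wf D D' by simp
  moreover have "(\<Sum>s\<leftarrow>segs. discordant D s) = sum_mset (image_mset (discordant D) (mset segs))"
    by (metis mset_map sum_mset_sum_list)
  moreover have "sum_mset (image_mset (discordant D) (mset segs)) = ?d a b + ?d a c + ?d b c"
    unfolding ms discordant_def by (cases xT; cases xM; cases xB) auto
  moreover have "even (?d a b + ?d a c + ?d b c)"
    by (cases "forward D a"; cases "forward D b"; cases "forward D c") auto
  then obtain k where "?d a b + ?d a c + ?d b c = 2 * k" by (rule evenE)
  ultimately show ?thesis by simp
qed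

section \<open>Reversing arrows and the band-pass move\<close>

definition flip_arrows :: "nat set \<Rightarrow> ep \<Rightarrow> ep" where
  "flip_arrows M e = (if aid e \<in> M then flip_ep e else e)"

lemma aid_flip_arrows [simp]: "aid (flip_arrows M e) = aid e"
  unfolding flip_arrows_def flip_ep_def by simp

lemma arrows_flip_arrows [simp]: "arrows (map (flip_arrows M) D) = arrows D"
  unfolding arrows_def by (simp add: image_image)

lemma opp_link_reverse_both: "opp_link ha ta hb tb = opp_link ta ha tb hb"
  unfolding opp_link_def by simp

lemma end_pos_flip_arrows:
  assumes wf: "wf_gauss D" and wf': "wf_gauss (map (flip_arrows M) D)" and a: "a \<in> arrows D"
  shows "end_pos (map (flip_arrows M) D) a t = end_pos D a (if a \<in> M then \<not> t else t)"
  using end_pos[OF wf a, of "if a \<in> M then \<not> t else t"]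
  by (intro end_pos_eqI[OF wf']) (auto simp: flip_arrows_def flip_ep_def)

text \<open>A reversed arrow changes direction, so each of its interleaved pairs with an arrow outside \<open>M\<close>
  switches between counted and not counted, while pairs inside \<open>M\<close> keep their status.\<close>
lemma opp_crossings_flip_arrows:
  assumes wf: "wf_gauss D" and wf': "wf_gauss (map (flip_arrows M) D)" and M: "M \<subseteq> arrows D"
  defines "t \<equiv> tail_pos D" and "h \<equiv> head_pos D"
  shows "even (opp_crossings (map (flip_arrows M) D) + opp_crossings D) \<longleftrightarrow>
           even (\<Sum>x\<in>arrows D - M. \<Sum>p\<in>M. of_bool (interleaved (t x) (h x) (t p) (h p)) :: nat)"
proof -
  let ?t' = "\<lambda>a. if a \<in> M then h a else t a" and ?h' = "\<lambda>a. if a \<in> M then t a else h a"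
  have "opp_crossings (map (flip_arrows M) D) = link_count (arrows D) ?t' ?h'"
    unfolding opp_crossings_def arrows_flip_arrows t_def h_def
    by (intro link_count_cong) (simp add: end_pos_flip_arrows[OF wf wf'])
  also have "\<dots> = link_count (arrows D - M) t h + (\<Sum>x\<in>arrows D - M. \<Sum>p\<in>M. pair_link ?t' ?h' p x)
                   + link_count M t h"
  proof -
    have "link_count (arrows D - M) ?t' ?h' = link_count (arrows D - M) t h"
      by (intro link_count_cong) simp
    moreover have "link_count M ?t' ?h' = link_count M t h"
      unfolding link_count_def by (intro sum.cong refl) (simp add: opp_link_reverse_both)
    ultimately show ?thesis using link_count_split[OF finite_arrows M] by simp
  qed
  finally have flipped: "opp_crossings (map (flip_arrows M) D) = \<dots>" .
  have original: "opp_crossings D = link_count (arrows D - M) t h + (\<Sum>x\<in>arrows D - M. \<Sum>p\<in>M. pair_link t h p x)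
                   + link_count M t h"
    unfolding opp_crossings_def t_def h_def using link_count_split[OF finite_arrows M] .
  have cross: "pair_link ?t' ?h' p x + pair_link t h p x = of_bool (interleaved (t x) (h x) (t p) (h p))"
    if x: "x \<in> arrows D - M" and p: "p \<in> M" for x p
  proof -
    have "p \<in> arrows D" "x \<noteq> p" using x p M by auto
    then have dist: "distinct [t p, h p, t x, h x]" "distinct [h p, t p, t x, h x]"
      using x unfolding t_def h_def by (auto simp: end_pos_eq_iff[OF wf])
    have "interleaved (h p) (t p) (t x) (h x) = interleaved (t x) (h x) (t p) (h p)"
      "interleaved (t p) (h p) (t x) (h x) = interleaved (t x) (h x) (t p) (h p)"
      using interleaved_commute[OF dist(1)] interleaved_flip_left[of "h p" "t p"] by simp_all
    moreover have "(h p < t p) = (\<not> t p < h p)" using dist(1) by auto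
    ultimately show ?thesis
      using x p unfolding pair_link_def by (simp add: opp_link_pair[OF dist(1)] opp_link_pair[OF dist(2)])
  qed
  have "opp_crossings (map (flip_arrows M) D) + opp_crossings D
        = 2 * (link_count (arrows D - M) t h + link_count M t h)
          + (\<Sum>x\<in>arrows D - M. \<Sum>p\<in>M. of_bool (interleaved (t x) (h x) (t p) (h p)))"
    unfolding flipped original by (simp add: cross sum.distrib[symmetric])
  then show ?thesis by simp
qed

lemma even_sum_of_bool_neq:
  "even (\<Sum>p\<in>M. of_bool (P p \<noteq> Q p) :: nat) \<longleftrightarrow> even (\<Sum>p\<in>M. of_bool (P p) + of_bool (Q p) :: nat)"
proof -
  have "(\<Sum>p\<in>M. of_bool (P p) + of_bool (Q p) :: nat)
        = (\<Sum>p\<in>M. of_bool (P p \<noteq> Q p)) + 2 * (\<Sum>p\<in>M. of_bool (P p \<and> Q p))"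
    unfolding sum_distrib_left sum.distrib[symmetric] by (intro sum.cong) auto
  then show ?thesis by simp
qed

text \<open>The eight endpoints form four adjacent pairs, and adjacent positions lie on the same side of
  each endpoint of the chord \<open>(tx, hx)\<close>.\<close>
lemma even_interleavings_paired:
  assumes dist: "distinct [p11, p12, p21, p22]"
    and adj: "adjacent (t p11) (t p12)" "adjacent (t p22) (t p21)"
             "adjacent (h p11) (h p21)" "adjacent (h p22) (h p12)"
    and away: "\<forall>p\<in>{p11, p12, p21, p22}. t p \<notin> {tx, hx} \<and> h p \<notin> {tx, hx}"
  shows "even (\<Sum>p\<in>{p11, p12, p21, p22}. of_bool (interleaved tx hx (t p) (h p)) :: nat)"
proof -
  let ?b = "\<lambda>z. of_bool (between tx hx z) :: nat"
  have "(\<Sum>p\<in>{p11, p12, p21, p22}. ?b (t p) + ?b (h p)) = 2 * (?b (t p11) + ?b (t p22) + ?b (h p11) + ?b (h p22))"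
  proof -
    have "?b (t p12) = ?b (t p11)" "?b (t p21) = ?b (t p22)" "?b (h p21) = ?b (h p11)" "?b (h p12) = ?b (h p22)"
      using away between_adjacent[OF adj(1), of tx hx] between_adjacent[OF adj(2), of tx hx]
        between_adjacent[OF adj(3), of tx hx] between_adjacent[OF adj(4), of tx hx] by auto
    then show ?thesis using dist by simp
  qed
  then show ?thesis unfolding interleaved_def even_sum_of_bool_neq by simp
qed

lemma BP_flips_paired_arrows:
  assumes wf: "wf_gauss D" and "BP D D'"
  obtains p11 p12 p21 p22 where "distinct [p11, p12, p21, p22]"
    and "{p11, p12, p21, p22} \<subseteq> arrows D" and "D' = map (flip_arrows {p11, p12, p21, p22}) D"
    and "adjacent (tail_pos D p11) (tail_pos D p12)" "adjacent (tail_pos D p22) (tail_pos D p21)"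
    and "adjacent (head_pos D p11) (head_pos D p21)" "adjacent (head_pos D p22) (head_pos D p12)"
proof -
  obtain p11 p12 p21 p22 s ori segs xs where dist: "distinct [p11, p12, p21, p22]"
    and ms: "mset segs = {# [Ep p11 True s, Ep p12 True (\<not> s)],
                    [Ep p22 True s, Ep p21 True (\<not> s)],
                    (if ori then [Ep p11 False s, Ep p21 False (\<not> s)]
                            else [Ep p21 False (\<not> s), Ep p11 False s]),
                    (if ori then [Ep p22 False s, Ep p12 False (\<not> s)]
                            else [Ep p12 False (\<not> s), Ep p22 False s]) #}"
    and l: "length xs = Suc (length segs)" and D: "D = interl xs segs"
    and D': "D' = interl xs (map (map flip_ep) segs)"
    using assms(2) unfolding BP_def local_repl_def by blast
  have segs: "set segs = {[Ep p11 True s, Ep p12 True (\<not> s)], [Ep p22 True s, Ep p21 True (\<not> s)],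
      (if ori then [Ep p11 False s, Ep p21 False (\<not> s)] else [Ep p21 False (\<not> s), Ep p11 False s]),
      (if ori then [Ep p22 False s, Ep p12 False (\<not> s)] else [Ep p12 False (\<not> s), Ep p22 False s])}"
    using arg_cong[OF ms, of set_mset] by simp
  define M where "M = {p11, p12, p21, p22}"
  have gap: "aid e \<notin> M" if "x \<in> set xs" "e \<in> set x" for x e
    using aid_notin_gap[OF wf D l that, of p11 s] aid_notin_gap[OF wf D l that, of p12 "\<not> s"]
      aid_notin_gap[OF wf D l that, of p21 "\<not> s"] aid_notin_gap[OF wf D l that, of p22 s]
    unfolding M_def by (cases ori) (auto simp: segs)
  have "map (flip_arrows M) D = interl (map (map (flip_arrows M)) xs) (map (map (flip_arrows M)) segs)"
    using interl_map[OF l] D by simp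
  also have "map (map (flip_arrows M)) xs = xs"
    using gap by (intro map_idI) (simp add: flip_arrows_def map_idI)
  also have "map (map (flip_arrows M)) segs = map (map flip_ep) segs"
    by (intro map_cong refl) (cases ori; auto simp: segs flip_arrows_def M_def)
  finally have "D' = map (flip_arrows M) D" using D' by simp
  moreover have "M \<subseteq> arrows D" using interl_set[OF l] D segs unfolding M_def arrows_def by force
  moreover have "adjacent (tail_pos D p11) (tail_pos D p12)" "adjacent (tail_pos D p22) (tail_pos D p21)"
    "adjacent (head_pos D p11) (head_pos D p21)" "adjacent (head_pos D p22) (head_pos D p12)"
    using adjacent_in_segment[OF wf D l, of "Ep p11 True s" "Ep p12 True (\<not> s)"]
      adjacent_in_segment[OF wf D l, of "Ep p22 True s" "Ep p21 True (\<not> s)"]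
      adjacent_in_segment[OF wf D l, of "Ep p11 False s" "Ep p21 False (\<not> s)"]
      adjacent_in_segment[OF wf D l, of "Ep p22 False s" "Ep p12 False (\<not> s)"]
    by (cases ori; simp add: segs)+
  ultimately show thesis using that dist unfolding M_def by blast
qed

lemma opp_crossings_BP:
  assumes wf: "wf_gauss D" and wf': "wf_gauss D'" and "BP D D'"
  shows "opp_crossings D' mod 2 = opp_crossings D mod 2"
proof -
  obtain p11 p12 p21 p22 where dist: "distinct [p11, p12, p21, p22]"
    and M_arrows: "{p11, p12, p21, p22} \<subseteq> arrows D" and D': "D' = map (flip_arrows {p11, p12, p21, p22}) D"
    and adj: "adjacent (tail_pos D p11) (tail_pos D p12)" "adjacent (tail_pos D p22) (tail_pos D p21)"
      "adjacent (head_pos D p11) (head_pos D p21)" "adjacent (head_pos D p22) (head_pos D p12)"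
    using BP_flips_paired_arrows[OF wf assms(3)] by blast
  let ?M = "{p11, p12, p21, p22}" and ?t = "tail_pos D" and ?h = "head_pos D"
  have "even (\<Sum>p\<in>?M. of_bool (interleaved (?t x) (?h x) (?t p) (?h p)) :: nat)"
    if x: "x \<in> arrows D - ?M" for x
  proof (rule even_interleavings_paired[OF dist adj])
    show "\<forall>p\<in>?M. ?t p \<notin> {?t x, ?h x} \<and> ?h p \<notin> {?t x, ?h x}"
      using x M_arrows by (auto simp: end_pos_eq_iff[OF wf])
  qed
  then have "even (\<Sum>x\<in>arrows D - ?M. \<Sum>p\<in>?M. of_bool (interleaved (?t x) (?h x) (?t p) (?h p)) :: nat)"
    by (rule dvd_sum)
  then have "even (opp_crossings D' + opp_crossings D)"
    using opp_crossings_flip_arrows[OF wf wf'[unfolded D'] M_arrows] D' by simp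
  then show ?thesis by (metis even_add even_iff_mod_2_eq_zero odd_iff_mod_2_eq_one)
qed

lemma opp_crossings_relabel:
  assumes wf: "wf_gauss D" and wf': "wf_gauss D'" and "relabel D D'"
  shows "opp_crossings D' = opp_crossings D"
proof -
  obtain f where f: "inj f" and D': "D' = map (\<lambda>e. Ep (f (aid e)) (is_tail e) (pos e)) D"
    using assms(3) unfolding relabel_def by blast
  have arrows': "arrows D' = f ` arrows D" unfolding D' arrows_def by (simp add: image_image)
  have "end_pos D' (f a) t = end_pos D a t" if "a \<in> arrows D" for a t
    using end_pos[OF wf that, of t] by (intro end_pos_eqI[OF wf']) (auto simp: D')
  then show ?thesis
    unfolding opp_crossings_def link_count_def arrows' using f
    by (simp add: sum.reindex inj_on_def inj_def)
qed

lemma ext_bp_step_opp_crossings_mod_2: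
  assumes "ext_bp_step D D'"
  shows "opp_crossings D' mod 2 = opp_crossings D mod 2"
proof -
  have wf: "wf_gauss D" "wf_gauss D'" using assms unfolding ext_bp_step_def by auto
  have "R1 D D' \<or> R1 D' D \<or> R2 D D' \<or> R2 D' D \<or> R3 D D' \<or> R3 D' D \<or>
      relabel D D' \<or> relabel D' D \<or> BP D D' \<or> BP D' D"
    using assms unfolding ext_bp_step_def by auto
  then show ?thesis
    using opp_crossings_R1[OF wf(1)] opp_crossings_R1[OF wf(2)] opp_crossings_R2[OF wf(1)]
      opp_crossings_R2[OF wf(2)] opp_crossings_R3[OF wf(1)] opp_crossings_R3[OF wf(2)]
      opp_crossings_relabel[OF wf] opp_crossings_relabel[OF wf(2,1)]
      opp_crossings_BP[OF wf] opp_crossings_BP[OF wf(2,1)]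
    by metis
qed

theorem theorem3:
  fixes K1 K2 :: gauss
  assumes "ext_bp_step\<^sup>*\<^sup>* K1 K2"
  shows "(v21 K1 + v22 K1) mod 2 = (v21 K2 + v22 K2) mod 2"
  using assms
proof (induction rule: rtranclp_induct)
  case base
  then show ?case by simp
next
  case (step K K')
  then have "wf_gauss K" "wf_gauss K'" unfolding ext_bp_step_def by auto
  moreover have "int (opp_crossings K') mod 2 = int (opp_crossings K) mod 2"
    using ext_bp_step_opp_crossings_mod_2[OF step.hyps(2)] by (metis of_nat_mod of_nat_numeral)
  ultimately show ?case using step.IH by (simp add: v21_v22_mod_2)
qed

end
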